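(* Let $(G, I, O)$ be an open graph with $G=(V,E)$, and let $(g, \prec, \lambda)$ be an extended gflow of $(G,I,O)$. Let $(p_i)_{i=1,\dots,|V|}$ be a permutation of $V$ such that for all $i<j$ we have $p_i \not\succ p_j$ (i.e. a linear extension of $\prec$). Then for every $i \in \{1,\dots,|V|-1\}$, the cut-rank $\rho_G(\{p_1,\dots,p_i\})$ is at most $|O|$; that is, $p$ is a linear rank-decomposition of $G$ of width at most $|O|$. *)

theory Defs
  imports Main
begin

definition simple_graph :: "'a set \<Rightarrow> ('a \<Rightarrow> 'a \<Rightarrow> bool) \<Rightarrow> bool" where
  "simple_graph V E \<longleftrightarrow> finite V
     \<and> (\<forall>u v. E u v \<longrightarrow> u \<in> V \<and> v \<in> V)
     \<and> (\<forall>u v. E u v \<longrightarrow> E v u)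
     \<and> (\<forall>u. \<not> E u u)"

definition open_graph :: "'a set \<Rightarrow> ('a \<Rightarrow> 'a \<Rightarrow> bool) \<Rightarrow> 'a set \<Rightarrow> 'a set \<Rightarrow> bool" where
  "open_graph V E Inp Out \<longleftrightarrow> simple_graph V E \<and> Inp \<subseteq> V \<and> Out \<subseteq> V"

definition odd_nbh :: "'a set \<Rightarrow> ('a \<Rightarrow> 'a \<Rightarrow> bool) \<Rightarrow> 'a set \<Rightarrow> 'a set" where
  "odd_nbh V E A = {w \<in> V. odd (card {u \<in> A. E u w})}"

datatype plane = XY | XZ | YZ

definition ext_gflow ::
  "'a set \<Rightarrow> ('a \<Rightarrow> 'a \<Rightarrow> bool) \<Rightarrow> 'a set \<Rightarrow> 'a set \<Rightarrow>
   ('a \<Rightarrow> 'a set) \<Rightarrow> ('a \<Rightarrow> 'a \<Rightarrow> bool) \<Rightarrow> ('a \<Rightarrow> plane) \<Rightarrow> bool" where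
  "ext_gflow V E Inp Out g prec lam \<longleftrightarrow>
     \<comment> \<open>prec is a strict partial order on V\<close>
     (\<forall>u v. prec u v \<longrightarrow> u \<in> V \<and> v \<in> V)
     \<and> (\<forall>v. \<not> prec v v)
     \<and> (\<forall>u v w. prec u v \<longrightarrow> prec v w \<longrightarrow> prec u w)
     \<and> (\<forall>v \<in> V - Out.
          g v \<subseteq> V - Inp
        \<and> (\<forall>w \<in> g v. w \<noteq> v \<longrightarrow> prec v w)
        \<and> (\<forall>w \<in> odd_nbh V E (g v). w \<noteq> v \<longrightarrow> prec v w)
        \<and> (lam v = XY \<longrightarrow> v \<notin> g v \<and> v \<in> odd_nbh V E (g v))
        \<and> (lam v = XZ \<longrightarrow> v \<in> g v \<and> v \<in> odd_nbh V E (g v))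
        \<and> (lam v = YZ \<longrightarrow> v \<in> g v \<and> v \<notin> odd_nbh V E (g v)))"

text \<open>Linear independence over GF(2) of the rows indexed by S of the adjacency
  matrix restricted to columns C: no nonempty subset of rows sums to zero.\<close>

definition gf2_rows_indep :: "('a \<Rightarrow> 'a \<Rightarrow> bool) \<Rightarrow> 'a set \<Rightarrow> 'a set \<Rightarrow> bool" where
  "gf2_rows_indep E C S \<longleftrightarrow>
     (\<forall>T \<subseteq> S. T \<noteq> {} \<longrightarrow> (\<exists>c \<in> C. odd (card {t \<in> T. E t c})))"

text \<open>Cut-rank: GF(2)-rank of the A \<times> (V - A) submatrix of the adjacency matrix,
  i.e. the maximal number of linearly independent rows.\<close>

definition cut_rank :: "'a set \<Rightarrow> ('a \<Rightarrow> 'a \<Rightarrow> bool) \<Rightarrow> 'a set \<Rightarrow> nat" where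
  "cut_rank V E A = Max {card S | S. S \<subseteq> A \<and> gf2_rows_indep E (V - A) S}"

end

theory Submission imports Defs begin

text \<open>A prefix A of a linear extension of the flow order is down-closed. Put B = V - A and
  D = B - Out, and read sets as vectors over GF(2) with sym_diff as addition. The rows of A give
  a linear map T \<mapsto> odd_nbh T - A into the subsets of B, injective on an independent set S of
  rows. The correction sets of the vertices of D give a linear map X \<mapsto> {w \<in> D. |X \<inter> g w| odd}
  from the subsets of B to those of D, which is onto because it is triangular with respect to the
  flow order: every w lies in g w or in its odd neighbourhood. The composite vanishes: g w lies in
  B and its odd neighbourhood avoids A, so by double counting every row of A meets g w evenly.
  Hence |S| + |D| \<le> |B|, that is |S| \<le> |Out - A|.\<close>

lemma odd_card_sym_diff:
  assumes "finite X" "finite Y"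
  shows "odd (card (sym_diff X Y)) \<longleftrightarrow> odd (card X) \<noteq> odd (card Y)"
proof -
  have "card (sym_diff X Y) = card (X - Y) + card (Y - X)"
    using assms by (simp add: card_Un_disjoint Diff_Int_distrib2)
  moreover have "card X = card (X \<inter> Y) + card (X - Y)" "card Y = card (Y \<inter> X) + card (Y - X)"
    using assms by (simp_all add: card_Int_Diff)
  ultimately show ?thesis by (simp add: Int_commute) presburger
qed

lemma even_card_odd_count_swap:
  assumes "finite S" "finite T"
  shows "even (card {s \<in> S. odd (card {t \<in> T. R s t})})
     \<longleftrightarrow> even (card {t \<in> T. odd (card {s \<in> S. R s t})})"
proof -
  have "(\<Sum>s\<in>S. card {t \<in> T. R s t}) = (\<Sum>t\<in>T. card {s \<in> S. R s t})"
    using sum.swap_restrict[OF assms, of "\<lambda>_ _. 1::nat" R] by simp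
  then show ?thesis
    by (simp add: assms flip: even_sum_iff)
qed

lemma sym_diff_hom_onto_if_triangular:
  fixes h :: "'a set \<Rightarrow> 'b set"
  assumes "wf r" "finite D"
    and h_add: "\<And>X Y. X \<subseteq> B \<Longrightarrow> Y \<subseteq> B \<Longrightarrow> h (sym_diff X Y) = sym_diff (h X) (h Y)"
    and triangular: "\<And>w. w \<in> D \<Longrightarrow>
      \<exists>X \<subseteq> B. h X \<subseteq> D \<and> w \<in> h X \<and> (\<forall>w' \<in> h X. w' = w \<or> (w', w) \<in> r)"
  shows "Pow D \<subseteq> h ` Pow B"
proof -
  have image_sym_diff: "sym_diff Z Z' \<in> h ` Pow B"
    if Z: "Z \<in> h ` Pow B" and Z': "Z' \<in> h ` Pow B" for Z Z'
  proof -
    obtain X X' where "X \<subseteq> B" "X' \<subseteq> B" "Z = h X" "Z' = h X'"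
      using Z Z' by blast
    then have "sym_diff Z Z' = h (sym_diff X X')" "sym_diff X X' \<subseteq> B"
      using h_add by auto
    then show ?thesis by blast
  qed
  have "h {} = {}"
    using h_add[of "{}" "{}"] by simp
  then have empty_image: "{} \<in> h ` Pow B"
    by (metis Pow_bottom image_eqI)
  have image_if_singletons: "Z \<in> h ` Pow B" if "finite Z" "\<And>z. z \<in> Z \<Longrightarrow> {z} \<in> h ` Pow B" for Z
    using that
  proof (induction Z rule: finite_induct)
    case (insert z Z)
    then have "sym_diff Z {z} \<in> h ` Pow B" by (intro image_sym_diff) auto
    moreover have "sym_diff Z {z} = insert z Z" using insert.hyps by auto
    ultimately show ?case by simp
  qed (simp add: empty_image)
  have singleton_image: "w \<in> D \<longrightarrow> {w} \<in> h ` Pow B" for w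
    using \<open>wf r\<close>
  proof (induction w rule: wf_induct_rule)
    case (less w)
    show ?case
    proof
      assume "w \<in> D"
      then obtain X where X: "X \<subseteq> B" "h X \<subseteq> D" "w \<in> h X" "\<forall>w' \<in> h X. w' = w \<or> (w', w) \<in> r"
        using triangular by meson
      have "finite (h X - {w})" using X(2) \<open>finite D\<close> by (simp add: finite_subset)
      moreover have "{w'} \<in> h ` Pow B" if "w' \<in> h X - {w}" for w'
        using that X(2,4) less.IH by auto
      ultimately have "h X - {w} \<in> h ` Pow B" by (rule image_if_singletons)
      moreover have "h X \<in> h ` Pow B" using X by auto
      ultimately have "sym_diff (h X) (h X - {w}) \<in> h ` Pow B" by (rule image_sym_diff[rotated])
      moreover have "sym_diff (h X) (h X - {w}) = {w}" using X by auto
      ultimately show "{w} \<in> h ` Pow B" by simp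
    qed
  qed
  show ?thesis
  proof
    fix Y assume "Y \<in> Pow D"
    then have Y: "Y \<subseteq> D" by simp
    show "Y \<in> h ` Pow B"
    proof (rule image_if_singletons)
      show "finite Y" using Y \<open>finite D\<close> by (rule finite_subset)
      show "{y} \<in> h ` Pow B" if "y \<in> Y" for y
        using that Y singleton_image by blast
    qed
  qed
qed

lemma card_add_card_le_if_sym_diff_complex:
  fixes f :: "'a set \<Rightarrow> 'b set" and h :: "'b set \<Rightarrow> 'c set"
  assumes "finite S" "finite B" "finite D"
    and f_into: "\<And>T. T \<subseteq> S \<Longrightarrow> f T \<subseteq> B"
    and f_add: "\<And>T U. T \<subseteq> S \<Longrightarrow> U \<subseteq> S \<Longrightarrow> f (sym_diff T U) = sym_diff (f T) (f U)"
    and f_inj: "\<And>T. T \<subseteq> S \<Longrightarrow> f T = {} \<Longrightarrow> T = {}"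
    and h_add: "\<And>X Y. X \<subseteq> B \<Longrightarrow> Y \<subseteq> B \<Longrightarrow> h (sym_diff X Y) = sym_diff (h X) (h Y)"
    and h_onto: "Pow D \<subseteq> h ` Pow B"
    and h_f: "\<And>T. T \<subseteq> S \<Longrightarrow> h (f T) = {}"
  shows "card S + card D \<le> card B"
proof -
  define \<sigma> where "\<sigma> Y = (SOME X. X \<subseteq> B \<and> h X = Y)" for Y
  have \<sigma>: "\<sigma> Y \<subseteq> B \<and> h (\<sigma> Y) = Y" if "Y \<subseteq> D" for Y
  proof -
    have "\<exists>X. X \<subseteq> B \<and> h X = Y" using h_onto that by blast
    then show ?thesis unfolding \<sigma>_def by (rule someI_ex)
  qed
  define F where "F = (\<lambda>(T, Y). sym_diff (f T) (\<sigma> Y))"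
  have h_F: "h (F (T, Y)) = Y" if "T \<subseteq> S" "Y \<subseteq> D" for T Y
    using that h_add[of "f T" "\<sigma> Y"] f_into h_f \<sigma> by (simp add: F_def)
  have "inj_on F (Pow S \<times> Pow D)"
  proof (rule inj_onI, clarify)
    fix T Y T' Y' assume T: "T \<subseteq> S" "T' \<subseteq> S" and Y: "Y \<subseteq> D" "Y' \<subseteq> D"
      and eq: "F (T, Y) = F (T', Y')"
    have "Y = Y'" using h_F[OF T(1) Y(1)] h_F[OF T(2) Y(2)] eq by simp
    with eq have "f T = f T'" unfolding F_def by auto
    then have "f (sym_diff T T') = {}" using f_add T by simp
    moreover have "sym_diff T T' \<subseteq> S" using T by blast
    ultimately have "sym_diff T T' = {}" using f_inj by blast
    with \<open>Y = Y'\<close> show "T = T' \<and> Y = Y'" by blast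
  qed
  moreover have "F ` (Pow S \<times> Pow D) \<subseteq> Pow B"
    using f_into \<sigma> by (auto simp: F_def)
  ultimately have "card (Pow S \<times> Pow D) \<le> card (Pow B)"
    using \<open>finite B\<close> by (simp add: card_inj_on_le)
  then have "(2::nat) ^ (card S + card D) \<le> 2 ^ card B"
    using assms(1-3) by (simp add: card_cartesian_product card_Pow power_add)
  then show ?thesis by simp
qed

lemma odd_nbh_sym_diff:
  assumes "finite T" "finite U"
  shows "odd_nbh V E (sym_diff T U) = sym_diff (odd_nbh V E T) (odd_nbh V E U)"
proof -
  have "{u \<in> sym_diff T U. E u w} = sym_diff {u \<in> T. E u w} {u \<in> U. E u w}" for w
    by blast
  then have "odd (card {u \<in> sym_diff T U. E u w})
      \<longleftrightarrow> odd (card {u \<in> T. E u w}) \<noteq> odd (card {u \<in> U. E u w})" for w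
    using assms by (simp add: odd_card_sym_diff)
  then show ?thesis unfolding odd_nbh_def by blast
qed

lemma cut_rank_le:
  assumes "finite A" and "\<And>S. S \<subseteq> A \<Longrightarrow> gf2_rows_indep E (V - A) S \<Longrightarrow> card S \<le> k"
  shows "cut_rank V E A \<le> k"
proof -
  let ?ranks = "{card S | S. S \<subseteq> A \<and> gf2_rows_indep E (V - A) S}"
  have "?ranks \<subseteq> card ` Pow A" by blast
  then have "finite ?ranks" using \<open>finite A\<close> by (simp add: finite_subset)
  moreover have "card {} \<in> ?ranks" unfolding gf2_rows_indep_def by force
  ultimately show ?thesis
    unfolding cut_rank_def using assms(2) by (subst Max_le_iff) auto
qed

lemma wf_ext_gflow_order:
  assumes "ext_gflow V E Inp Out g prec lam" "finite V"
  shows "wf {(u, v). prec u v}"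
proof (rule finite_acyclic_wf)
  have "{(u, v). prec u v} \<subseteq> V \<times> V" and irrefl: "\<And>v. \<not> prec v v"
    and trans: "\<And>u v w. prec u v \<Longrightarrow> prec v w \<Longrightarrow> prec u w"
    using assms(1) unfolding ext_gflow_def by blast+
  then show "finite {(u, v). prec u v}"
    using assms(2) finite_subset by blast
  have "trans {(u, v). prec u v}"
    using trans unfolding trans_def by blast
  then show "acyclic {(u, v). prec u v}"
    using irrefl by (simp add: acyclic_def)
qed

lemma ext_gflowD:
  assumes "ext_gflow V E Inp Out g prec lam" "v \<in> V - Out"
  shows ext_gflow_correction_subset: "g v \<subseteq> V"
    and ext_gflow_correction_later: "w \<in> g v \<Longrightarrow> w \<noteq> v \<Longrightarrow> prec v w"
    and ext_gflow_odd_nbh_later: "w \<in> odd_nbh V E (g v) \<Longrightarrow> w \<noteq> v \<Longrightarrow> prec v w"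
    and ext_gflow_self: "v \<in> g v \<or> v \<in> odd_nbh V E (g v)"
proof -
  note clause = assms(1)[unfolded ext_gflow_def, THEN conjunct2, THEN conjunct2, THEN conjunct2,
      rule_format, OF assms(2)]
  show "g v \<subseteq> V" using clause by blast
  show "w \<in> g v \<Longrightarrow> w \<noteq> v \<Longrightarrow> prec v w" using clause by blast
  show "w \<in> odd_nbh V E (g v) \<Longrightarrow> w \<noteq> v \<Longrightarrow> prec v w" using clause by blast
  show "v \<in> g v \<or> v \<in> odd_nbh V E (g v)" using clause by (cases "lam v") auto
qed

locale down_closed_cut =
  fixes V E Inp Out g prec lam and A :: "'a set"
  assumes open_graph: "open_graph V E Inp Out"
    and gflow: "ext_gflow V E Inp Out g prec lam"
    and A_subset: "A \<subseteq> V"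
    and A_down_closed: "\<And>a b. a \<in> A \<Longrightarrow> prec b a \<Longrightarrow> b \<in> V \<Longrightarrow> b \<in> A"
begin

lemma finite_V: "finite V" and E_sym: "E u v \<Longrightarrow> E v u" and Out_subset: "Out \<subseteq> V"
  using open_graph unfolding open_graph_def simple_graph_def by blast+

definition odd_meeting :: "'a set \<Rightarrow> 'a set" where
  "odd_meeting X = {w \<in> V - A - Out. odd (card (X \<inter> g w))}"

lemma correction_outside:
  assumes "w \<in> V - A - Out"
  shows "g w \<subseteq> V - A"
  using assms ext_gflowD[OF gflow] A_down_closed by blast

lemma odd_nbh_correction_outside:
  assumes "w \<in> V - A - Out"
  shows "odd_nbh V E (g w) \<inter> A = {}"
  using assms ext_gflowD[OF gflow] A_down_closed by blast

lemma odd_meeting_sym_diff: "odd_meeting (sym_diff X Y) = sym_diff (odd_meeting X) (odd_meeting Y)"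
proof -
  have "finite (g w)" if "w \<in> V - A - Out" for w
    using that finite_V correction_outside finite_subset by blast
  then have "odd (card (sym_diff X Y \<inter> g w)) \<longleftrightarrow> odd (card (X \<inter> g w)) \<noteq> odd (card (Y \<inter> g w))"
    if "w \<in> V - A - Out" for w
    using that odd_card_sym_diff[of "X \<inter> g w" "Y \<inter> g w"]
    by (simp add: Int_Un_distrib2 Diff_Int_distrib2)
  then show ?thesis unfolding odd_meeting_def by blast
qed

lemma odd_meeting_row_sums:
  assumes "T \<subseteq> A"
  shows "odd_meeting (odd_nbh V E T - A) = {}"
proof -
  have "even (card ((odd_nbh V E T - A) \<inter> g w))" if w: "w \<in> V - A - Out" for w
  proof -
    have g_w: "g w \<subseteq> V - A" using w by (rule correction_outside)
    have "finite (g w)" "finite T"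
      using g_w assms A_subset finite_V by (meson Diff_subset finite_subset subset_trans)+
    then have "even (card {c \<in> g w. odd (card {t \<in> T. E t c})})
        \<longleftrightarrow> even (card {t \<in> T. odd (card {c \<in> g w. E t c})})"
      by (rule even_card_odd_count_swap)
    moreover have "{t \<in> T. odd (card {c \<in> g w. E t c})} = {}"
    proof -
      have "{c \<in> g w. E t c} = {u \<in> g w. E u t}" for t
        using E_sym by blast
      then have "{t \<in> T. odd (card {c \<in> g w. E t c})} \<subseteq> odd_nbh V E (g w) \<inter> A"
        using assms A_subset unfolding odd_nbh_def by auto
      then show ?thesis using odd_nbh_correction_outside[OF w] by blast
    qed
    moreover have "(odd_nbh V E T - A) \<inter> g w = {c \<in> g w. odd (card {t \<in> T. E t c})}"
      using g_w unfolding odd_nbh_def by blast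
    ultimately show ?thesis by simp
  qed
  then show ?thesis unfolding odd_meeting_def by blast
qed

lemma odd_meeting_triangular:
  assumes w: "w \<in> V - A - Out"
  shows "\<exists>X \<subseteq> V - A. odd_meeting X \<subseteq> V - A - Out \<and> w \<in> odd_meeting X
    \<and> (\<forall>w' \<in> odd_meeting X. w' = w \<or> (w', w) \<in> {(u, v). prec u v})"
proof -
  have "w \<in> g w \<or> w \<in> odd_nbh V E (g w)" using w by (intro ext_gflow_self[OF gflow]) blast
  then show ?thesis
  proof
    assume "w \<in> g w"
    have "w' \<in> odd_meeting {w} \<longleftrightarrow> w' \<in> V - A - Out \<and> w \<in> g w'" for w'
      unfolding odd_meeting_def by (cases "w \<in> g w'") auto
    then have "{w} \<subseteq> V - A \<and> odd_meeting {w} \<subseteq> V - A - Out \<and> w \<in> odd_meeting {w}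
        \<and> (\<forall>w' \<in> odd_meeting {w}. w' = w \<or> (w', w) \<in> {(u, v). prec u v})"
      using w \<open>w \<in> g w\<close> ext_gflow_correction_later[OF gflow] by blast
    then show ?thesis by blast
  next
    assume "w \<in> odd_nbh V E (g w)"
    define X where "X = {c \<in> V - A. E w c}"
    have "w' \<in> odd_meeting X \<longleftrightarrow> w' \<in> V - A - Out \<and> w \<in> odd_nbh V E (g w')" for w'
    proof (cases "w' \<in> V - A - Out")
      case True
      then have "X \<inter> g w' = {u \<in> g w'. E u w}"
        using correction_outside E_sym unfolding X_def by blast
      then show ?thesis using True w unfolding odd_meeting_def odd_nbh_def by auto
    qed (auto simp: odd_meeting_def)
    then have "X \<subseteq> V - A \<and> odd_meeting X \<subseteq> V - A - Out \<and> w \<in> odd_meeting X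
        \<and> (\<forall>w' \<in> odd_meeting X. w' = w \<or> (w', w) \<in> {(u, v). prec u v})"
      using w \<open>w \<in> odd_nbh V E (g w)\<close> ext_gflow_odd_nbh_later[OF gflow] unfolding X_def by blast
    then show ?thesis by blast
  qed
qed

lemma odd_meeting_onto: "Pow (V - A - Out) \<subseteq> odd_meeting ` Pow (V - A)"
proof (rule sym_diff_hom_onto_if_triangular)
  show "wf {(u, v). prec u v}" by (rule wf_ext_gflow_order[OF gflow finite_V])
  show "finite (V - A - Out)" using finite_V by simp
  show "odd_meeting (sym_diff X Y) = sym_diff (odd_meeting X) (odd_meeting Y)" for X Y
    by (rule odd_meeting_sym_diff)
  show "\<exists>X \<subseteq> V - A. odd_meeting X \<subseteq> V - A - Out \<and> w \<in> odd_meeting X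
      \<and> (\<forall>w' \<in> odd_meeting X. w' = w \<or> (w', w) \<in> {(u, v). prec u v})"
    if "w \<in> V - A - Out" for w
    using that by (rule odd_meeting_triangular)
qed

lemma card_independent_rows_le:
  assumes "S \<subseteq> A" and indep: "gf2_rows_indep E (V - A) S"
  shows "card S \<le> card (Out - A)"
proof -
  have "finite S" using assms(1) A_subset finite_V by (meson finite_subset subset_trans)
  have "card S + card (V - A - Out) \<le> card (V - A)"
  proof (rule card_add_card_le_if_sym_diff_complex[where f = "\<lambda>T. odd_nbh V E T - A"])
    show "finite S" "finite (V - A)" "finite (V - A - Out)"
      using \<open>finite S\<close> finite_V by simp_all
    show "odd_nbh V E T - A \<subseteq> V - A" for T unfolding odd_nbh_def by blast
    show "odd_nbh V E (sym_diff T U) - A = sym_diff (odd_nbh V E T - A) (odd_nbh V E U - A)"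
      if "T \<subseteq> S" "U \<subseteq> S" for T U
    proof -
      have "finite T" "finite U" using that \<open>finite S\<close> finite_subset by blast+
      then show ?thesis by (simp add: odd_nbh_sym_diff) blast
    qed
    show "T = {}" if "T \<subseteq> S" "odd_nbh V E T - A = {}" for T
      using that indep unfolding gf2_rows_indep_def odd_nbh_def by blast
    show "odd_meeting (sym_diff X Y) = sym_diff (odd_meeting X) (odd_meeting Y)" for X Y
      by (rule odd_meeting_sym_diff)
    show "Pow (V - A - Out) \<subseteq> odd_meeting ` Pow (V - A)" by (rule odd_meeting_onto)
    show "odd_meeting (odd_nbh V E T - A) = {}" if "T \<subseteq> S" for T
      using that \<open>S \<subseteq> A\<close> by (intro odd_meeting_row_sums) blast
  qed
  moreover have "card (V - A) = card (Out - A) + card (V - A - Out)"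
  proof -
    have "(V - A) \<inter> Out = Out - A" using Out_subset by blast
    then show ?thesis using card_Int_Diff[of "V - A" Out] finite_V by simp
  qed
  ultimately show ?thesis by simp
qed

lemma cut_rank_le_card_Out: "cut_rank V E A \<le> card (Out - A)"
proof (rule cut_rank_le)
  show "finite A" using A_subset finite_V by (rule finite_subset)
qed (rule card_independent_rows_le)

end

lemma prefix_of_linear_extension_down_closed:
  fixes p :: "nat \<Rightarrow> 'a"
  assumes "bij_betw p {1..n} V"
    and "\<forall>i j. 1 \<le> i \<longrightarrow> i < j \<longrightarrow> j \<le> n \<longrightarrow> \<not> prec (p j) (p i)"
    and "a \<in> p ` {1..i}" "prec b a" "b \<in> V"
  shows "b \<in> p ` {1..i}"
proof -
  obtain k where k: "k \<in> {1..i}" "a = p k" using assms(3) by blast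
  obtain j where j: "j \<in> {1..n}" "b = p j" using assms(1,5) by (auto simp: bij_betw_def)
  have "j \<le> i"
  proof (rule ccontr)
    assume "\<not> j \<le> i"
    then have "1 \<le> k" "k < j" "j \<le> n" using k j by auto
    then show False using assms(2,4) k(2) j(2) by blast
  qed
  with j show ?thesis by (intro image_eqI[of b p j]) auto
qed

theorem lemma1:
  fixes V :: "'a set" and E :: "'a \<Rightarrow> 'a \<Rightarrow> bool" and Inp Out :: "'a set"
    and g :: "'a \<Rightarrow> 'a set" and prec :: "'a \<Rightarrow> 'a \<Rightarrow> bool" and lam :: "'a \<Rightarrow> plane"
    and p :: "nat \<Rightarrow> 'a"
  assumes "open_graph V E Inp Out"
    and "ext_gflow V E Inp Out g prec lam"
    and "bij_betw p {1..card V} V"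
    and "\<forall>i j. 1 \<le> i \<longrightarrow> i < j \<longrightarrow> j \<le> card V \<longrightarrow> \<not> prec (p j) (p i)"
  shows "\<forall>i \<in> {1..card V - 1}. cut_rank V E (p ` {1..i}) \<le> card Out"
proof
  fix i assume "i \<in> {1..card V - 1}"
  then have "{1..i} \<subseteq> {1..card V}" by auto
  then have "p ` {1..i} \<subseteq> V"
    using assms(3) unfolding bij_betw_def by blast
  then have "down_closed_cut V E Inp Out g prec lam (p ` {1..i})"
    using assms(1,2) prefix_of_linear_extension_down_closed[OF assms(3,4)]
    by unfold_locales
  then have "cut_rank V E (p ` {1..i}) \<le> card (Out - p ` {1..i})"
    by (rule down_closed_cut.cut_rank_le_card_Out)
  also have "\<dots> \<le> card Out"
    using assms(1) unfolding open_graph_def simple_graph_def by (meson Diff_subset card_mono finite_subset)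
  finally show "cut_rank V E (p ` {1..i}) \<le> card Out" .
qed

end
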